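(* Let $G$ be a directed graph and $D$ a demand. Suppose there exists a $2h$-length moving cut $C$ with $2h$-length sparsity $\phi=\mathrm{spars}_{2h}(C,D)$. Then any flow routing $D$ in $G$ all of whose flow paths have length at most $h$ has congestion at least $\frac{1}{2\phi}$.
   Context: $G=(V,E)$ is a finite directed graph with positive integer edge lengths $\ell(e)$ and capacities $u(e)$. A demand is $D:V\times V\to\mathbb{R}_{\ge0}$. For $H>0$, an $H$-length moving cut is $C:E\to\{0,\tfrac1H,\dots\}\cap[0,1]$, with size $|C|=\sum_eu(e)C(e)$; $G-C$ is $G$ with lengths $\ell(e)+H\cdot C(e)$. $\mathrm{sep}_{h'}(C,D)=\sum_{(u,v):\mathrm{dist}_{G-C}(u,v)>h'}D(u,v)$ and (when positive) $\mathrm{spars}_{h'}(C,D)=|C|/\mathrm{sep}_{h'}(C,D)$. A flow assigns nonnegative values to simple directed paths; it routes $D$ if for each ordered pair $(v,w)$ the total value on $v\to w$ paths equals $D(v,w)$; its congestion is $\max_e(\text{flow through }e)/u(e)$. *)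

theory Defs
  imports "Graph_Theory.Shortest_Path"
begin

definition is_moving_cut :: "('a,'b) pre_digraph \<Rightarrow> real \<Rightarrow> ('b \<Rightarrow> real) \<Rightarrow> bool" where
  "is_moving_cut G H C \<longleftrightarrow>
     (\<forall>e \<in> arcs G. (\<exists>k::nat. C e = real k / H) \<and> 0 \<le> C e \<and> C e \<le> 1)"

definition cut_size :: "('a,'b) pre_digraph \<Rightarrow> ('b \<Rightarrow> nat) \<Rightarrow> ('b \<Rightarrow> real) \<Rightarrow> real" where
  "cut_size G cap C = (\<Sum>e \<in> arcs G. real (cap e) * C e)"

text \<open>Distance in G - C: shortest walk length with lengths len e + H * C e (infinite if unreachable).\<close>
definition dist_minus :: "('a,'b) pre_digraph \<Rightarrow> ('b \<Rightarrow> nat) \<Rightarrow> real \<Rightarrow> ('b \<Rightarrow> real) \<Rightarrow> 'a \<Rightarrow> 'a \<Rightarrow> ereal" where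
  "dist_minus G len H C u v = wf_digraph.\<mu> G (\<lambda>e. real (len e) + H * C e) u v"

definition sep :: "('a,'b) pre_digraph \<Rightarrow> ('b \<Rightarrow> nat) \<Rightarrow> real \<Rightarrow> ('b \<Rightarrow> real) \<Rightarrow> real
                   \<Rightarrow> ('a \<Rightarrow> 'a \<Rightarrow> real) \<Rightarrow> real" where
  "sep G len H C h' D =
     (\<Sum>(u,v) \<in> {(u,v). u \<in> verts G \<and> v \<in> verts G \<and> dist_minus G len H C u v > ereal h'}. D u v)"

definition spars :: "('a,'b) pre_digraph \<Rightarrow> ('b \<Rightarrow> nat) \<Rightarrow> ('b \<Rightarrow> nat) \<Rightarrow> real \<Rightarrow> ('b \<Rightarrow> real)
                     \<Rightarrow> real \<Rightarrow> ('a \<Rightarrow> 'a \<Rightarrow> real) \<Rightarrow> real" where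
  "spars G len cap H C h' D = cut_size G cap C / sep G len H C h' D"

definition is_flow :: "('a,'b) pre_digraph \<Rightarrow> ('a \<Rightarrow> 'b list \<Rightarrow> 'a \<Rightarrow> real) \<Rightarrow> bool" where
  "is_flow G F \<longleftrightarrow> (\<forall>u p v. pre_digraph.apath G u p v \<longrightarrow> 0 \<le> F u p v)"

definition routes :: "('a,'b) pre_digraph \<Rightarrow> ('a \<Rightarrow> 'b list \<Rightarrow> 'a \<Rightarrow> real) \<Rightarrow> ('a \<Rightarrow> 'a \<Rightarrow> real) \<Rightarrow> bool" where
  "routes G F D \<longleftrightarrow> (\<forall>v \<in> verts G. \<forall>w \<in> verts G.
      (\<Sum>p \<in> {p. pre_digraph.apath G v p w}. F v p w) = D v w)"

definition flow_through :: "('a,'b) pre_digraph \<Rightarrow> ('a \<Rightarrow> 'b list \<Rightarrow> 'a \<Rightarrow> real) \<Rightarrow> 'b \<Rightarrow> real" where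
  "flow_through G F e =
     (\<Sum>(u,p,v) \<in> {(u,p,v). pre_digraph.apath G u p v \<and> e \<in> set p}. F u p v)"

definition congestion :: "('a,'b) pre_digraph \<Rightarrow> ('b \<Rightarrow> nat) \<Rightarrow> ('a \<Rightarrow> 'b list \<Rightarrow> 'a \<Rightarrow> real) \<Rightarrow> real" where
  "congestion G cap F = Max ((\<lambda>e. flow_through G F e / real (cap e)) ` arcs G)"

definition path_length_bounded :: "('a,'b) pre_digraph \<Rightarrow> ('b \<Rightarrow> nat) \<Rightarrow> ('a \<Rightarrow> 'b list \<Rightarrow> 'a \<Rightarrow> real) \<Rightarrow> real \<Rightarrow> bool" where
  "path_length_bounded G len F h \<longleftrightarrow>
     (\<forall>u p v. pre_digraph.apath G u p v \<and> F u p v > 0 \<longrightarrow> wf_digraph.awalk_cost (\<lambda>e. real (len e)) p \<le> h)"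

end

theory Submission
  imports Defs
begin

text \<open>Weak duality between length-bounded flows and moving cuts. If the pair \<open>(u, v)\<close> is
  separated, i.e. more than \<open>2h\<close> apart in \<open>G - C\<close>, then every \<open>u\<close>-\<open>v\<close> flow path of length at most
  \<open>h\<close> gains more than \<open>h\<close> length from the cut, so its edges carry cut weight more than \<open>1/2\<close>.
  Hence the separated demand, all of which is routed on such paths, is at most twice
  \<open>\<Sum>\<^sub>p F(p) C(p) = \<Sum>\<^sub>e C(e) \<cdot> flow(e) \<le> |C| \<cdot> congestion\<close>.\<close>

lemma (in wf_digraph) dist_minus_le_apath_cost:
  assumes "apath u p v"
  shows "dist_minus G len H C u v \<le> ereal (awalk_cost (\<lambda>e. real (len e)) p + H * sum C (set p))"
proof -
  have walk: "awalk u p v" and "distinct p"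
    using assms by (auto simp: apath_def intro: distinct_verts_imp_distinct)
  let ?cost = "\<lambda>e. real (len e) + H * C e"
  have "awalk_cost ?cost p = awalk_cost (\<lambda>e. real (len e)) p + H * sum_list (map C p)"
    unfolding awalk_cost_def by (simp add: sum_list_addf sum_list_const_mult)
  also have "sum_list (map C p) = sum C (set p)"
    using \<open>distinct p\<close> by (simp add: sum_list_distinct_conv_sum_set)
  finally show ?thesis
    unfolding dist_minus_def using min_cost_le_walk_cost[OF walk, of ?cost] by simp
qed

lemma (in wf_digraph) separated_short_apath_cut_weight_gt_half:
  assumes "apath u p v" and "awalk_cost (\<lambda>e. real (len e)) p \<le> h" and "h > 0"
    and "dist_minus G len (2*h) C u v > ereal (2*h)"
  shows "1 < 2 * sum C (set p)"
proof -
  have "ereal (2*h) < ereal (awalk_cost (\<lambda>e. real (len e)) p + 2*h * sum C (set p))"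
    using assms(4) dist_minus_le_apath_cost[OF assms(1)] by (rule order_less_le_trans)
  then have "h * 1 < h * (2 * sum C (set p))"
    using assms(2) by (simp add: algebra_simps)
  then show ?thesis using \<open>h > 0\<close> by simp
qed

lemma (in fin_digraph) sep_eq_sum_separated_apaths:
  assumes "routes G F D"
  shows "sep G len H C h' D =
    (\<Sum>(u,p,v) \<in> {(u,p,v). apath u p v \<and> dist_minus G len H C u v > ereal h'}. F u p v)"
proof -
  define S where "S = {(u,v). u \<in> verts G \<and> v \<in> verts G \<and> dist_minus G len H C u v > ereal h'}"
  have "finite S"
    by (rule finite_subset[of _ "verts G \<times> verts G"]) (auto simp: S_def)
  have "sep G len H C h' D = (\<Sum>(u,v)\<in>S. \<Sum>p\<in>{p. apath u p v}. F u p v)"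
    using assms unfolding sep_def S_def routes_def by (intro sum.cong) auto
  also have "\<dots> = (\<Sum>x\<in>S. \<Sum>p\<in>{p. apath (fst x) p (snd x)}. F (fst x) p (snd x))"
    by (simp add: split_def)
  also have "\<dots> = (\<Sum>(x,p)\<in>Sigma S (\<lambda>x. {p. apath (fst x) p (snd x)}). F (fst x) p (snd x))"
    using \<open>finite S\<close> by (intro sum.Sigma) (auto simp: apaths_finite)
  also have "\<dots> =
    (\<Sum>(u,p,v) \<in> {(u,p,v). apath u p v \<and> dist_minus G len H C u v > ereal h'}. F u p v)"
    by (rule sum.reindex_bij_witness[where i="\<lambda>(u,p,v). ((u,v),p)" and j="\<lambda>((u,v),p). (u,p,v)"])
       (auto simp: S_def apath_def)
  finally show ?thesis .
qed

lemma (in fin_digraph) sum_apaths_cut_weight_eq: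
  "(\<Sum>(u,p,v) \<in> {(u,p,v). apath u p v}. F u p v * sum C (set p)) =
   (\<Sum>e\<in>arcs G. C e * flow_through G F e)"
proof -
  let ?T = "{(u,p,v). apath u p v}"
  have flow: "flow_through G F e = (\<Sum>(u,p,v)\<in>?T. if e \<in> set p then F u p v else 0)" for e
  proof -
    have paths_through_e: "{(u,p,v). apath u p v \<and> e \<in> set p} = {t \<in> ?T. e \<in> set (fst (snd t))}"
      by auto
    show ?thesis
      unfolding flow_through_def paths_through_e sum.inter_filter[OF apaths_finite_triple]
      by (intro sum.cong refl) (auto split: prod.split)
  qed
  have "(\<Sum>(u,p,v)\<in>?T. F u p v * sum C (set p)) =
        (\<Sum>(u,p,v)\<in>?T. \<Sum>e\<in>arcs G. C e * (if e \<in> set p then F u p v else 0))"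
  proof (intro sum.cong refl, clarify)
    fix u p v assume "apath u p v"
    then have "set p \<subseteq> arcs G" by (auto simp: apath_def awalk_def)
    then show "F u p v * sum C (set p) = (\<Sum>e\<in>arcs G. C e * (if e \<in> set p then F u p v else 0))"
      by (simp add: sum_distrib_left mult.commute if_distrib sum.If_cases Int_absorb1 inf_commute)
  qed
  also have "\<dots> = (\<Sum>e\<in>arcs G. C e * flow_through G F e)"
    unfolding flow split_def by (subst sum.swap) (simp add: sum_distrib_left)
  finally show ?thesis .
qed

lemma (in fin_digraph) flow_through_le_congestion:
  assumes "e \<in> arcs G" and "cap e > 0"
  shows "flow_through G F e \<le> real (cap e) * congestion G cap F"
proof -
  have "flow_through G F e / real (cap e) \<le> congestion G cap F"
    unfolding congestion_def using assms(1) by (auto intro: Max_ge)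
  then show ?thesis using assms(2) by (simp add: divide_le_eq mult.commute)
qed

lemma (in fin_digraph) sum_cut_flow_le_cut_size_congestion:
  assumes "\<forall>e \<in> arcs G. cap e > 0 \<and> C e \<ge> 0"
  shows "(\<Sum>e\<in>arcs G. C e * flow_through G F e) \<le> cut_size G cap C * congestion G cap F"
proof -
  have "(\<Sum>e\<in>arcs G. C e * flow_through G F e) \<le>
        (\<Sum>e\<in>arcs G. C e * (real (cap e) * congestion G cap F))"
    using assms by (intro sum_mono mult_left_mono flow_through_le_congestion) auto
  also have "\<dots> = cut_size G cap C * congestion G cap F"
    unfolding cut_size_def by (simp add: sum_distrib_right mult.assoc mult.left_commute)
  finally show ?thesis .
qed

lemma (in fin_digraph) sep_le_cut_size_congestion:
  assumes "\<forall>e \<in> arcs G. cap e > 0 \<and> C e \<ge> 0" and "h > 0"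
    and "is_flow G F" and "routes G F D" and "path_length_bounded G len F h"
  shows "sep G len (2*h) C (2*h) D \<le> 2 * cut_size G cap C * congestion G cap F"
proof -
  let ?T = "{(u,p,v). apath u p v}"
  let ?S = "{(u,p,v). apath u p v \<and> dist_minus G len (2*h) C u v > ereal (2*h)}"
  let ?weighted = "\<lambda>(u,p,v). F u p v * (2 * sum C (set p))"
  have flow_nonneg: "0 \<le> F u p v" if "apath u p v" for u p v
    using assms(3) that by (auto simp: is_flow_def)
  have weight_nonneg: "0 \<le> sum C (set p)" if "apath u p v" for u p v
    using assms(1) that by (intro sum_nonneg) (auto simp: apath_def awalk_def)
  have "sep G len (2*h) C (2*h) D = (\<Sum>(u,p,v)\<in>?S. F u p v)"
    using assms(4) by (rule sep_eq_sum_separated_apaths)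
  also have "\<dots> \<le> (\<Sum>t\<in>?S. ?weighted t)"
  proof (intro sum_mono, clarify)
    fix u p v assume "apath u p v" and sep: "dist_minus G len (2*h) C u v > ereal (2*h)"
    show "F u p v \<le> F u p v * (2 * sum C (set p))"
    proof (cases "F u p v > 0")
      case True
      then have "awalk_cost (\<lambda>e. real (len e)) p \<le> h"
        using assms(5) \<open>apath u p v\<close> by (auto simp: path_length_bounded_def)
      then have "1 < 2 * sum C (set p)"
        using separated_short_apath_cut_weight_gt_half \<open>apath u p v\<close> \<open>h > 0\<close> sep by blast
      then show ?thesis using True by simp
    qed (use flow_nonneg[OF \<open>apath u p v\<close>] in simp)
  qed
  also have "\<dots> \<le> (\<Sum>t\<in>?T. ?weighted t)"
    using flow_nonneg weight_nonneg
    by (intro sum_mono2[OF apaths_finite_triple]) auto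
  also have "\<dots> = 2 * (\<Sum>(u,p,v)\<in>?T. F u p v * sum C (set p))"
    by (simp add: sum_distrib_left case_prod_unfold mult_ac)
  also have "\<dots> = 2 * (\<Sum>e\<in>arcs G. C e * flow_through G F e)"
    by (simp only: sum_apaths_cut_weight_eq)
  also have "\<dots> \<le> 2 * cut_size G cap C * congestion G cap F"
    using sum_cut_flow_le_cut_size_congestion[OF assms(1)] by simp
  finally show ?thesis .
qed

theorem theoremA3:
  fixes G :: "('a,'b) pre_digraph" and len cap :: "'b \<Rightarrow> nat" and h :: real
    and D :: "'a \<Rightarrow> 'a \<Rightarrow> real" and C :: "'b \<Rightarrow> real"
    and F :: "'a \<Rightarrow> 'b list \<Rightarrow> 'a \<Rightarrow> real"
  assumes "fin_digraph G"
    and "\<forall>e \<in> arcs G. len e > 0 \<and> cap e > 0"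
    and "\<forall>u \<in> verts G. \<forall>v \<in> verts G. D u v \<ge> 0"
    and "h > 0"
    and "is_moving_cut G (2*h) C"
    and "sep G len (2*h) C (2*h) D > 0"
    and "is_flow G F" and "routes G F D" and "path_length_bounded G len F h"
  shows "congestion G cap F \<ge> 1 / (2 * spars G len cap (2*h) C (2*h) D)"
proof -
  define s where "s = sep G len (2*h) C (2*h) D"
  define c where "c = cut_size G cap C"
  have cut_nonneg: "\<forall>e \<in> arcs G. cap e > 0 \<and> C e \<ge> 0"
    using assms(2,5) by (auto simp: is_moving_cut_def)
  have duality: "s \<le> 2 * c * congestion G cap F"
    unfolding s_def c_def using assms(4,7-9) cut_nonneg
    by (intro fin_digraph.sep_le_cut_size_congestion[OF assms(1)])
  have "c \<ge> 0"
    unfolding c_def cut_size_def using cut_nonneg by (auto intro: sum_nonneg)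
  moreover have "s > 0" using assms(6) by (simp add: s_def)
  ultimately have "c > 0" using duality by (cases "c = 0") auto
  then show ?thesis
    using duality \<open>s > 0\<close> unfolding spars_def s_def[symmetric] c_def[symmetric]
    by (simp add: field_simps)
qed

end
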